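(* Let $Q$ be a finite, simple, commutative, automorphic loop of exponent $2$ which is not associative. Let $U$ be the socle of $\mathrm{Mlt}(Q)$, a regular normal elementary abelian $2$-subgroup, viewed as a $GF(2)$-vector space (written additively) on which $\mathrm{Inn}(Q)$ acts linearly by conjugation, $u\mapsto u^h$. For $x\in Q$ write $R_x=h_xu_x$ with unique $h_x\in\mathrm{Inn}(Q)$ and $u_x\in U$; for $u\in U$ let $h_u=h_x$ where $x$ is the unique element with $u_x=u$. Then for all $u,v\in U$, $h_uh_v=h_vh_{u^{h_v}}$.
   Context: A loop is a set with a binary operation in which left and right division are uniquely solvable and which has a neutral element $1$. $R_a:x\mapsto xa$; $\mathrm{Mlt}(Q)$ is generated by all left and right translations; $\mathrm{Inn}(Q)$ is the stabilizer of $1$ in $\mathrm{Mlt}(Q)$; $Q$ is automorphic if $\mathrm{Inn}(Q)\le\mathrm{Aut}(Q)$; exponent $2$ means $x^2=1$ for all $x$; simple means no nontrivial proper normal subloops. For such $Q$, $\mathrm{Mlt}(Q)$ is a primitive group of affine type, $\mathrm{Mlt}(Q)=\mathrm{Inn}(Q)U$ with $U\cap\mathrm{Inn}(Q)=1$, and $Q$ is identified with $U$ via $u\leftrightarrow 1u$, under which $h\in\mathrm{Inn}(Q)$ acts as the linear map $u\mapsto u^h=h^{-1}uh$. Maps act on the right and are composed left to right. The map $x\mapsto u_x$ is a bijection $Q\to U$. *)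

theory Defs
  imports "HOL-Algebra.Algebra"
begin

definition is_loop :: "'a set \<Rightarrow> ('a \<Rightarrow> 'a \<Rightarrow> 'a) \<Rightarrow> 'a \<Rightarrow> bool" where
  "is_loop Q m e \<longleftrightarrow>
     e \<in> Q \<and> (\<forall>x\<in>Q. \<forall>y\<in>Q. m x y \<in> Q) \<and>
     (\<forall>x\<in>Q. m e x = x \<and> m x e = x) \<and>
     (\<forall>a\<in>Q. \<forall>b\<in>Q. (\<exists>!x. x \<in> Q \<and> m a x = b) \<and> (\<exists>!y. y \<in> Q \<and> m y a = b))"

definition rtrans :: "'a set \<Rightarrow> ('a \<Rightarrow> 'a \<Rightarrow> 'a) \<Rightarrow> 'a \<Rightarrow> ('a \<Rightarrow> 'a)" where
  "rtrans Q m a = (\<lambda>x\<in>Q. m x a)"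

definition ltrans :: "'a set \<Rightarrow> ('a \<Rightarrow> 'a \<Rightarrow> 'a) \<Rightarrow> 'a \<Rightarrow> ('a \<Rightarrow> 'a)" where
  "ltrans Q m a = (\<lambda>x\<in>Q. m a x)"

definition Mlt :: "'a set \<Rightarrow> ('a \<Rightarrow> 'a \<Rightarrow> 'a) \<Rightarrow> ('a \<Rightarrow> 'a) set" where
  "Mlt Q m = generate (BijGroup Q) (rtrans Q m ` Q \<union> ltrans Q m ` Q)"

definition MltG :: "'a set \<Rightarrow> ('a \<Rightarrow> 'a \<Rightarrow> 'a) \<Rightarrow> ('a \<Rightarrow> 'a) monoid" where
  "MltG Q m = (BijGroup Q)\<lparr>carrier := Mlt Q m\<rparr>"

definition Inn :: "'a set \<Rightarrow> ('a \<Rightarrow> 'a \<Rightarrow> 'a) \<Rightarrow> 'a \<Rightarrow> ('a \<Rightarrow> 'a) set" where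
  "Inn Q m e = {h \<in> Mlt Q m. h e = e}"

definition automorphic :: "'a set \<Rightarrow> ('a \<Rightarrow> 'a \<Rightarrow> 'a) \<Rightarrow> 'a \<Rightarrow> bool" where
  "automorphic Q m e \<longleftrightarrow> (\<forall>h\<in>Inn Q m e. \<forall>x\<in>Q. \<forall>y\<in>Q. h (m x y) = m (h x) (h y))"

definition commutative_loop :: "'a set \<Rightarrow> ('a \<Rightarrow> 'a \<Rightarrow> 'a) \<Rightarrow> bool" where
  "commutative_loop Q m \<longleftrightarrow> (\<forall>x\<in>Q. \<forall>y\<in>Q. m x y = m y x)"

definition exponent2 :: "'a set \<Rightarrow> ('a \<Rightarrow> 'a \<Rightarrow> 'a) \<Rightarrow> 'a \<Rightarrow> bool" where
  "exponent2 Q m e \<longleftrightarrow> (\<forall>x\<in>Q. m x x = e)"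

definition associative_loop :: "'a set \<Rightarrow> ('a \<Rightarrow> 'a \<Rightarrow> 'a) \<Rightarrow> bool" where
  "associative_loop Q m \<longleftrightarrow> (\<forall>x\<in>Q. \<forall>y\<in>Q. \<forall>z\<in>Q. m (m x y) z = m x (m y z))"

text \<open>Subloops and normal subloops (Bruck's definition:
  xN = Nx, (Nx)y = N(xy), y(xN) = (yx)N).\<close>

definition subloop :: "'a set \<Rightarrow> ('a \<Rightarrow> 'a \<Rightarrow> 'a) \<Rightarrow> 'a \<Rightarrow> 'a set \<Rightarrow> bool" where
  "subloop Q m e N \<longleftrightarrow> N \<subseteq> Q \<and> e \<in> N \<and> (\<forall>x\<in>N. \<forall>y\<in>N. m x y \<in> N) \<and>
     (\<forall>a\<in>N. \<forall>b\<in>N. \<forall>x\<in>Q. (m a x = b \<longrightarrow> x \<in> N) \<and> (m x a = b \<longrightarrow> x \<in> N))"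

definition normal_subloop :: "'a set \<Rightarrow> ('a \<Rightarrow> 'a \<Rightarrow> 'a) \<Rightarrow> 'a \<Rightarrow> 'a set \<Rightarrow> bool" where
  "normal_subloop Q m e N \<longleftrightarrow> subloop Q m e N \<and>
     (\<forall>x\<in>Q. \<forall>y\<in>Q.
        (\<lambda>n. m x n) ` N = (\<lambda>n. m n x) ` N \<and>
        (\<lambda>n. m (m n x) y) ` N = (\<lambda>n. m n (m x y)) ` N \<and>
        (\<lambda>n. m y (m x n)) ` N = (\<lambda>n. m (m y x) n) ` N)"

definition simple_loop :: "'a set \<Rightarrow> ('a \<Rightarrow> 'a \<Rightarrow> 'a) \<Rightarrow> 'a \<Rightarrow> bool" where
  "simple_loop Q m e \<longleftrightarrow> (\<forall>N. normal_subloop Q m e N \<longrightarrow> N = {e} \<or> N = Q)"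

definition minimal_normal :: "'g set \<Rightarrow> ('g, 'b) monoid_scheme \<Rightarrow> bool" where
  "minimal_normal N G \<longleftrightarrow> N \<lhd> G \<and> N \<noteq> {\<one>\<^bsub>G\<^esub>} \<and>
     (\<forall>M. M \<lhd> G \<and> M \<subseteq> N \<and> M \<noteq> {\<one>\<^bsub>G\<^esub>} \<longrightarrow> M = N)"

definition socle :: "('g, 'b) monoid_scheme \<Rightarrow> 'g set" where
  "socle G = generate G (\<Union>{N. minimal_normal N G})"

text \<open>Decomposition R_x = h_x u_x (maps composed left to right, i.e. as functions
  R_x = u_x \<circ> h_x, which is u_x \<otimes> h_x in BijGroup).\<close>

definition hx :: "'a set \<Rightarrow> ('a \<Rightarrow> 'a \<Rightarrow> 'a) \<Rightarrow> 'a \<Rightarrow> ('a \<Rightarrow> 'a) set \<Rightarrow> 'a \<Rightarrow> ('a \<Rightarrow> 'a)" where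
  "hx Q m e U x = (THE h. h \<in> Inn Q m e \<and>
      (\<exists>u\<in>U. rtrans Q m x = u \<otimes>\<^bsub>BijGroup Q\<^esub> h))"

definition ux :: "'a set \<Rightarrow> ('a \<Rightarrow> 'a \<Rightarrow> 'a) \<Rightarrow> 'a \<Rightarrow> ('a \<Rightarrow> 'a) set \<Rightarrow> 'a \<Rightarrow> ('a \<Rightarrow> 'a)" where
  "ux Q m e U x = (THE u. u \<in> U \<and>
      (\<exists>h\<in>Inn Q m e. rtrans Q m x = u \<otimes>\<^bsub>BijGroup Q\<^esub> h))"

definition hu :: "'a set \<Rightarrow> ('a \<Rightarrow> 'a \<Rightarrow> 'a) \<Rightarrow> 'a \<Rightarrow> ('a \<Rightarrow> 'a) set \<Rightarrow> ('a \<Rightarrow> 'a) \<Rightarrow> ('a \<Rightarrow> 'a)" where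
  "hu Q m e U u = hx Q m e U (THE x. x \<in> Q \<and> ux Q m e U x = u)"

text \<open>u^h = h^{-1} u h with left-to-right composition, i.e. h \<circ> u \<circ> h^{-1}.\<close>

definition conj_act :: "'a set \<Rightarrow> ('a \<Rightarrow> 'a) \<Rightarrow> ('a \<Rightarrow> 'a) \<Rightarrow> ('a \<Rightarrow> 'a)" where
  "conj_act Q u h = h \<otimes>\<^bsub>BijGroup Q\<^esub> u \<otimes>\<^bsub>BijGroup Q\<^esub> inv\<^bsub>BijGroup Q\<^esub> h"

end

theory Submission
  imports Defs
begin

text \<open>An inner mapping k is an automorphism fixing 1, so k\<inverse> R_x k = R_(xk). Conjugating the
  decomposition R_x = h_x u_x by k therefore decomposes R_(xk) with factors again in Inn(Q) and U
  (U is normal, Inn(Q) is the stabiliser of 1), and uniqueness of the decomposition gives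
  h_(xk) = k\<inverse> h_x k. For x = 1u and k = h_v the point 1u^k is xk, which is the claimed identity.\<close>

lemma (in group) conjugate_mult:
  "\<lbrakk>g \<in> carrier G; a \<in> carrier G; b \<in> carrier G\<rbrakk> \<Longrightarrow>
   g \<otimes> (a \<otimes> b) \<otimes> inv g = (g \<otimes> a \<otimes> inv g) \<otimes> (g \<otimes> b \<otimes> inv g)"
  by (simp add: m_assoc flip: m_assoc[of "inv g" g])

lemma (in group) conjugate_mult_cancel:
  "\<lbrakk>g \<in> carrier G; a \<in> carrier G\<rbrakk> \<Longrightarrow> g \<otimes> a \<otimes> inv g \<otimes> g = g \<otimes> a"
  by (simp add: m_assoc)

lemma BijGroup_carrier: "carrier (BijGroup S) = Bij S"
  by (simp add: BijGroup_def)

lemma Bij_apply_closed: "f \<in> Bij S \<Longrightarrow> z \<in> S \<Longrightarrow> f z \<in> S"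
  using Bij_imp_funcset by blast

lemma BijGroup_mult_apply:
  "f \<in> Bij S \<Longrightarrow> g \<in> Bij S \<Longrightarrow> z \<in> S \<Longrightarrow> (f \<otimes>\<^bsub>BijGroup S\<^esub> g) z = f (g z)"
  by (simp add: BijGroup_def compose_def)

lemma BijGroup_inv_apply: "f \<in> Bij S \<Longrightarrow> z \<in> S \<Longrightarrow> (inv\<^bsub>BijGroup S\<^esub> f) (f z) = z"
  by (simp add: inv_BijGroup Bij_def bij_betw_def Bij_apply_closed[of f S z])

lemma BijGroup_apply_inv: "f \<in> Bij S \<Longrightarrow> z \<in> S \<Longrightarrow> f ((inv\<^bsub>BijGroup S\<^esub> f) z) = z"
  by (auto simp: inv_BijGroup Bij_def bij_betw_inv_into_right)

lemma BijGroup_mult_Bij: "f \<in> Bij S \<Longrightarrow> g \<in> Bij S \<Longrightarrow> f \<otimes>\<^bsub>BijGroup S\<^esub> g \<in> Bij S"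
  by (simp add: BijGroup_def compose_Bij)

lemma BijGroup_inv_Bij: "f \<in> Bij S \<Longrightarrow> inv\<^bsub>BijGroup S\<^esub> f \<in> Bij S"
  using group.inv_closed[OF group_BijGroup] by (simp add: BijGroup_carrier)

lemma conj_act_Bij: "u \<in> Bij S \<Longrightarrow> h \<in> Bij S \<Longrightarrow> conj_act S u h \<in> Bij S"
  by (simp add: conj_act_def BijGroup_mult_Bij BijGroup_inv_Bij)

lemma conj_act_apply:
  assumes "u \<in> Bij S" "h \<in> Bij S" "z \<in> S"
  shows "conj_act S u h z = h (u ((inv\<^bsub>BijGroup S\<^esub> h) z))"
  using assms
  by (simp add: conj_act_def BijGroup_mult_apply BijGroup_mult_Bij BijGroup_inv_Bij Bij_apply_closed)

lemma conj_act_mult: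
  "\<lbrakk>u \<in> Bij S; v \<in> Bij S; h \<in> Bij S\<rbrakk> \<Longrightarrow>
   conj_act S (u \<otimes>\<^bsub>BijGroup S\<^esub> v) h = conj_act S u h \<otimes>\<^bsub>BijGroup S\<^esub> conj_act S v h"
  unfolding conj_act_def BijGroup_carrier[symmetric]
  by (rule group.conjugate_mult[OF group_BijGroup])

lemma conj_act_mult_self:
  "\<lbrakk>u \<in> Bij S; h \<in> Bij S\<rbrakk> \<Longrightarrow> conj_act S u h \<otimes>\<^bsub>BijGroup S\<^esub> h = h \<otimes>\<^bsub>BijGroup S\<^esub> u"
  unfolding conj_act_def BijGroup_carrier[symmetric]
  by (rule group.conjugate_mult_cancel[OF group_BijGroup])

lemma restrict_Bij_of_unique_solutions:
  assumes "\<And>b. b \<in> S \<Longrightarrow> \<exists>!x. x \<in> S \<and> f x = b" and "f ` S \<subseteq> S"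
  shows "(\<lambda>x\<in>S. f x) \<in> Bij S"
proof -
  have "inj_on f S"
    using assms by (metis inj_onI image_subset_iff)
  moreover have "S \<subseteq> f ` S"
    using assms(1) by blast
  ultimately show ?thesis
    using assms(2) by (simp add: Bij_def bij_betw_def)
qed

lemma rtrans_Bij: "is_loop Q m e \<Longrightarrow> a \<in> Q \<Longrightarrow> rtrans Q m a \<in> Bij Q"
  unfolding rtrans_def is_loop_def
  by (intro restrict_Bij_of_unique_solutions) auto

lemma ltrans_Bij: "is_loop Q m e \<Longrightarrow> a \<in> Q \<Longrightarrow> ltrans Q m a \<in> Bij Q"
  unfolding ltrans_def is_loop_def
  by (intro restrict_Bij_of_unique_solutions) auto

lemma subgroup_Mlt: "is_loop Q m e \<Longrightarrow> subgroup (Mlt Q m) (BijGroup Q)"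
  unfolding Mlt_def
  by (intro group.generate_is_subgroup group_BijGroup)
     (auto simp: BijGroup_carrier rtrans_Bij ltrans_Bij)

lemma rtrans_apply_conj_automorphism:
  assumes loop: "is_loop Q m e" and "x \<in> Q" and h: "h \<in> Bij Q"
    and hom: "\<forall>y\<in>Q. \<forall>z\<in>Q. h (m y z) = m (h y) (h z)"
  shows "conj_act Q (rtrans Q m x) h = rtrans Q m (h x)"
proof (rule extensionalityI)
  have R: "rtrans Q m x \<in> Bij Q" using rtrans_Bij[OF loop \<open>x \<in> Q\<close>] .
  show "conj_act Q (rtrans Q m x) h \<in> extensional Q"
    using conj_act_Bij[OF R h] by (rule Bij_imp_extensional)
  show "rtrans Q m (h x) \<in> extensional Q" by (simp add: rtrans_def)
  fix z assume "z \<in> Q"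
  define z' where "z' = (inv\<^bsub>BijGroup Q\<^esub> h) z"
  have "z' \<in> Q" and "h z' = z"
    using \<open>z \<in> Q\<close> h unfolding z'_def
    by (simp_all add: Bij_apply_closed BijGroup_inv_Bij BijGroup_apply_inv)
  then show "conj_act Q (rtrans Q m x) h z = rtrans Q m (h x) z"
    using conj_act_apply[OF R h \<open>z \<in> Q\<close>] hom \<open>x \<in> Q\<close> \<open>z \<in> Q\<close>
    by (simp add: z'_def[symmetric] rtrans_def)
qed

locale regular_normal_subgroup_of_Mlt =
  fixes Q :: "'a set" and m :: "'a \<Rightarrow> 'a \<Rightarrow> 'a" and e :: 'a and U :: "('a \<Rightarrow> 'a) set"
  assumes loop: "is_loop Q m e"
    and normal: "U \<lhd> MltG Q m"
    and regular: "\<forall>x\<in>Q. \<exists>!u. u \<in> U \<and> u e = x"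
begin

interpretation Sym: group "BijGroup Q" by (rule group_BijGroup)

lemma e_in_Q: "e \<in> Q"
  using loop by (simp add: is_loop_def)

lemma U_subset_Mlt: "U \<subseteq> Mlt Q m"
  using subgroup.subset[OF normal_imp_subgroup[OF normal]] by (simp add: MltG_def)

lemma Mlt_Bij: "h \<in> Mlt Q m \<Longrightarrow> h \<in> Bij Q"
  using subgroup.subset[OF subgroup_Mlt[OF loop]] by (auto simp: BijGroup_carrier)

lemma U_Bij: "u \<in> U \<Longrightarrow> u \<in> Bij Q"
  using U_subset_Mlt Mlt_Bij by blast

lemma Inn_Bij: "h \<in> Inn Q m e \<Longrightarrow> h \<in> Bij Q"
  by (simp add: Inn_def Mlt_Bij)

lemma conj_act_in_U: "h \<in> Mlt Q m \<Longrightarrow> u \<in> U \<Longrightarrow> conj_act Q u h \<in> U"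
  using normal.inv_op_closed2[OF normal, of h u]
    Sym.m_inv_consistent[OF subgroup_Mlt[OF loop]]
  by (simp add: MltG_def conj_act_def)

lemma conj_act_in_Inn: "k \<in> Inn Q m e \<Longrightarrow> h \<in> Inn Q m e \<Longrightarrow> conj_act Q h k \<in> Inn Q m e"
  using subgroup_Mlt[OF loop] conj_act_apply[OF Inn_Bij Inn_Bij e_in_Q, of h k]
    BijGroup_inv_apply[OF Inn_Bij e_in_Q, of k]
  by (auto simp: Inn_def conj_act_def intro: subgroup.m_closed subgroup.m_inv_closed)

lemma rtrans_in_Mlt: "x \<in> Q \<Longrightarrow> rtrans Q m x \<in> Mlt Q m"
  unfolding Mlt_def by (rule generate.incl) blast

lemma rtrans_apply_e: "x \<in> Q \<Longrightarrow> rtrans Q m x e = x"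
  using loop e_in_Q by (simp add: is_loop_def rtrans_def)

lemma rtrans_decomposition: "x \<in> Q \<Longrightarrow> \<exists>u\<in>U. \<exists>h\<in>Inn Q m e. rtrans Q m x = u \<otimes>\<^bsub>BijGroup Q\<^esub> h"
proof -
  assume "x \<in> Q"
  then obtain u where u: "u \<in> U" "u e = x"
    using regular by blast
  define h where "h = inv\<^bsub>BijGroup Q\<^esub> u \<otimes>\<^bsub>BijGroup Q\<^esub> rtrans Q m x"
  have R: "rtrans Q m x \<in> Bij Q"
    using rtrans_Bij[OF loop \<open>x \<in> Q\<close>] .
  have "h \<in> Mlt Q m"
    unfolding h_def using U_subset_Mlt u(1) rtrans_in_Mlt[OF \<open>x \<in> Q\<close>] subgroup_Mlt[OF loop]
    by (auto intro: subgroup.m_closed subgroup.m_inv_closed)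
  moreover have "h e = e"
    unfolding h_def using u(2) BijGroup_inv_apply[OF U_Bij[OF u(1)] e_in_Q] U_Bij[OF u(1)] R e_in_Q
      rtrans_apply_e[OF \<open>x \<in> Q\<close>]
    by (simp add: BijGroup_mult_apply BijGroup_inv_Bij)
  moreover have "rtrans Q m x = u \<otimes>\<^bsub>BijGroup Q\<^esub> h"
    unfolding h_def using U_Bij[OF u(1)] R unfolding BijGroup_carrier[symmetric]
    by (simp flip: Sym.m_assoc)
  ultimately show ?thesis
    using u(1) by (auto simp: Inn_def)
qed

lemma U_Inn_mult_apply_e: "u \<in> U \<Longrightarrow> h \<in> Inn Q m e \<Longrightarrow> (u \<otimes>\<^bsub>BijGroup Q\<^esub> h) e = u e"
  using U_Bij Inn_Bij e_in_Q by (simp add: Inn_def BijGroup_mult_apply)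

lemma rtrans_decomposition_unique:
  assumes "x \<in> Q" and u: "u \<in> U" "u' \<in> U" and h: "h \<in> Inn Q m e" "h' \<in> Inn Q m e"
    and R: "rtrans Q m x = u \<otimes>\<^bsub>BijGroup Q\<^esub> h" "rtrans Q m x = u' \<otimes>\<^bsub>BijGroup Q\<^esub> h'"
  shows "u = u' \<and> h = h'"
proof -
  have "u e = x" "u' e = x"
    using R u h rtrans_apply_e[OF \<open>x \<in> Q\<close>] by (metis U_Inn_mult_apply_e)+
  then have "u = u'"
    using regular u \<open>x \<in> Q\<close> by blast
  moreover have "h = h'"
    using R \<open>u = u'\<close> Sym.l_cancel[of u h h'] U_Bij[OF u(1)] Inn_Bij[OF h(1)] Inn_Bij[OF h(2)]
    by (simp add: BijGroup_carrier)
  ultimately show ?thesis ..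
qed

lemma ux_hx_eqI:
  assumes "x \<in> Q" "u \<in> U" "h \<in> Inn Q m e" "rtrans Q m x = u \<otimes>\<^bsub>BijGroup Q\<^esub> h"
  shows "ux Q m e U x = u" and "hx Q m e U x = h"
  unfolding ux_def hx_def using assms rtrans_decomposition_unique[OF assms(1)]
  by (blast intro!: the_equality)+

lemma ux_hx_decomposition:
  assumes "x \<in> Q"
  shows "ux Q m e U x \<in> U" and "hx Q m e U x \<in> Inn Q m e"
    and "rtrans Q m x = ux Q m e U x \<otimes>\<^bsub>BijGroup Q\<^esub> hx Q m e U x"
  using rtrans_decomposition[OF assms] ux_hx_eqI[OF assms] by auto

lemma ux_apply_e: "x \<in> Q \<Longrightarrow> ux Q m e U x e = x"
  using ux_hx_decomposition[of x] rtrans_apply_e[of x] by (metis U_Inn_mult_apply_e)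

lemma hu_eq_hx_apply_e:
  assumes "v \<in> U" shows "hu Q m e U v = hx Q m e U (v e)"
proof -
  have "v e \<in> Q"
    using Bij_apply_closed[OF U_Bij[OF assms] e_in_Q] .
  then have "ux Q m e U (v e) = v"
    using regular assms ux_hx_decomposition(1) ux_apply_e by blast
  then have "(THE x. x \<in> Q \<and> ux Q m e U x = v) = v e"
    using \<open>v e \<in> Q\<close> ux_apply_e by (auto intro!: the_equality)
  then show ?thesis
    by (simp add: hu_def)
qed

lemma hx_apply_Inn:
  assumes aut: "automorphic Q m e" and "x \<in> Q" and k: "k \<in> Inn Q m e"
  shows "hx Q m e U (k x) = conj_act Q (hx Q m e U x) k"
proof -
  have "rtrans Q m (k x) = conj_act Q (rtrans Q m x) k"
    using rtrans_apply_conj_automorphism[OF loop \<open>x \<in> Q\<close> Inn_Bij[OF k]] aut k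
    by (simp add: automorphic_def)
  also have "\<dots> = conj_act Q (ux Q m e U x) k \<otimes>\<^bsub>BijGroup Q\<^esub> conj_act Q (hx Q m e U x) k"
    using ux_hx_decomposition[OF \<open>x \<in> Q\<close>] U_Bij Inn_Bij k by (simp add: conj_act_mult)
  finally have "rtrans Q m (k x) = \<dots>" .
  moreover have "conj_act Q (ux Q m e U x) k \<in> U"
    using k ux_hx_decomposition(1)[OF \<open>x \<in> Q\<close>] conj_act_in_U by (simp add: Inn_def)
  moreover have "conj_act Q (hx Q m e U x) k \<in> Inn Q m e"
    using k ux_hx_decomposition(2)[OF \<open>x \<in> Q\<close>] by (rule conj_act_in_Inn)
  ultimately show ?thesis
    using Bij_apply_closed[OF Inn_Bij[OF k] \<open>x \<in> Q\<close>] by (simp add: ux_hx_eqI(2))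
qed

lemma hu_mult_hu:
  assumes aut: "automorphic Q m e" and u: "u \<in> U" and v: "v \<in> U"
  shows "hu Q m e U v \<otimes>\<^bsub>BijGroup Q\<^esub> hu Q m e U u
       = hu Q m e U (conj_act Q u (hu Q m e U v)) \<otimes>\<^bsub>BijGroup Q\<^esub> hu Q m e U v"
proof -
  let ?k = "hu Q m e U v"
  have ue: "u e \<in> Q" and ve: "v e \<in> Q"
    using U_Bij u v e_in_Q by (simp_all add: Bij_apply_closed)
  have k: "?k \<in> Inn Q m e"
    using hu_eq_hx_apply_e[OF v] ux_hx_decomposition(2)[OF ve] by simp
  have "conj_act Q u ?k e = ?k (u e)"
    using k conj_act_apply[OF U_Bij[OF u] Inn_Bij[OF k] e_in_Q] BijGroup_inv_apply[OF Inn_Bij[OF k] e_in_Q]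
    by (simp add: Inn_def)
  then have "hu Q m e U (conj_act Q u ?k) = hx Q m e U (?k (u e))"
    using hu_eq_hx_apply_e conj_act_in_U k u by (simp add: Inn_def)
  also have "\<dots> = conj_act Q (hu Q m e U u) ?k"
    using hx_apply_Inn[OF aut ue k] hu_eq_hx_apply_e[OF u] by simp
  finally show ?thesis
    using conj_act_mult_self[OF Inn_Bij Inn_Bij, of "hu Q m e U u" ?k] k
      ux_hx_decomposition(2)[OF ue] hu_eq_hx_apply_e[OF u] by simp
qed

end

theorem lemma4p2:
  fixes Q :: "'a set" and m :: "'a \<Rightarrow> 'a \<Rightarrow> 'a" and e :: 'a and U :: "('a \<Rightarrow> 'a) set"
  assumes loop: "is_loop Q m e" and fin: "finite Q"
    and simple: "simple_loop Q m e"
    and comm: "commutative_loop Q m"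
    and aut: "automorphic Q m e"
    and exp2: "exponent2 Q m e"
    and nonassoc: "\<not> associative_loop Q m"
    and U_def: "U = socle (MltG Q m)"
    and U_normal: "U \<lhd> MltG Q m"
    and U_elab: "\<forall>u\<in>U. \<forall>v\<in>U. u \<otimes>\<^bsub>BijGroup Q\<^esub> v = v \<otimes>\<^bsub>BijGroup Q\<^esub> u \<and>
                   u \<otimes>\<^bsub>BijGroup Q\<^esub> u = \<one>\<^bsub>BijGroup Q\<^esub>"
    and U_regular: "\<forall>x\<in>Q. \<exists>!u. u \<in> U \<and> u e = x"
  shows "\<forall>u\<in>U. \<forall>v\<in>U.
           hu Q m e U v \<otimes>\<^bsub>BijGroup Q\<^esub> hu Q m e U u
         = hu Q m e U (conj_act Q u (hu Q m e U v)) \<otimes>\<^bsub>BijGroup Q\<^esub> hu Q m e U v"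
proof -
  interpret regular_normal_subgroup_of_Mlt Q m e U
    using loop U_normal U_regular by (rule regular_normal_subgroup_of_Mlt.intro)
  show ?thesis
    using hu_mult_hu[OF aut] by blast
qed

end
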